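(* For any $y,\bar y\in\mathbb R$, $$\|\nabla w_h(y)\|\le C_P\|f\|,\qquad \|w_h(y)\|\le e^{-y}\|f\|,$$ $$\|\nabla(w_h(y)-w_h(\bar y))\|\le C_P^3|e^y-e^{\bar y}|\,\|f\|,$$ $$\|w_h(y)-w_h(\bar y)\|\le e^{-y}|e^{y-\bar y}-1|\,\|f\|,$$ $$\|\nabla(w_h(y)-w_h(\bar y))\|\le\tfrac12e^{-y/2}|e^{y-\bar y}-1|\,\|f\|.$$
   Context: $\Omega\subset\mathbb R^d$, $d\in\{1,2,3\}$, is a bounded polyhedral domain and $\|\cdot\|$ is the $L^2(\Omega)$ norm. $C_P$ is the Poincaré constant: $\|v\|\le C_P\|\nabla v\|$ for all $v\in H_0^1(\Omega)$. $\mathbb V_h\subset H_0^1(\Omega)$ is the space of continuous piecewise linear finite element functions on a conforming shape-regular simplicial partition of $\Omega$. Let $f\in L^2(\Omega)$. For $y\in\mathbb R$, $w_h(y)\in\mathbb V_h$ is the unique solution of $\int_\Omega\nabla w_h(y)\cdot\nabla v_h+e^y\int_\Omega w_h(y)v_h=\int_\Omega fv_h$ for all $v_h\in\mathbb V_h$. *)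

theory Defs
  imports "HOL-Analysis.Analysis"
begin

definition bounded_domain :: "(real^'n) set \<Rightarrow> bool" where
  "bounded_domain \<Omega> \<longleftrightarrow> open \<Omega> \<and> bounded \<Omega> \<and> connected \<Omega> \<and> \<Omega> \<noteq> {}
     \<and> \<Omega> = interior (closure \<Omega>)"

text \<open>Conforming simplicial partition of the closure of Omega into d-simplices;
  since the closure is a finite union of simplices, Omega is polyhedral.\<close>
definition conforming_triangulation :: "(real^'n) set set \<Rightarrow> (real^'n) set \<Rightarrow> bool" where
  "conforming_triangulation \<T> \<Omega> \<longleftrightarrow>
     finite \<T> \<and> \<T> \<noteq> {} \<and>
     (\<forall>T\<in>\<T>. int CARD('n) simplex T) \<and>
     \<Union>\<T> = closure \<Omega> \<and>
     (\<forall>T1\<in>\<T>. \<forall>T2\<in>\<T>. (T1 \<inter> T2) face_of T1 \<and> (T1 \<inter> T2) face_of T2)"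

text \<open>Continuous piecewise linear finite element space with zero boundary values
  (functions extended by zero outside Omega).\<close>
definition P1_space :: "(real^'n) set set \<Rightarrow> (real^'n) set \<Rightarrow> (real^'n \<Rightarrow> real) set" where
  "P1_space \<T> \<Omega> = {v. continuous_on (closure \<Omega>) v
       \<and> (\<forall>T\<in>\<T>. \<exists>a b. \<forall>x\<in>T. v x = a \<bullet> x + b)
       \<and> (\<forall>x. x \<notin> \<Omega> \<longrightarrow> v x = 0)}"

text \<open>Pointwise gradient (exists a.e. for piecewise linear functions; set to 0 elsewhere).\<close>
definition grad :: "(real^'n \<Rightarrow> real) \<Rightarrow> real^'n \<Rightarrow> real^'n" where
  "grad v x = (if \<exists>D. GDERIV v x :> D then (THE D. GDERIV v x :> D) else 0)"

definition L2_norm :: "(real^'n) set \<Rightarrow> (real^'n \<Rightarrow> real) \<Rightarrow> real" where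
  "L2_norm \<Omega> u = sqrt (\<integral>x. (u x)\<^sup>2 \<partial>(lebesgue_on \<Omega>))"

definition L2_norm_grad :: "(real^'n) set \<Rightarrow> (real^'n \<Rightarrow> real) \<Rightarrow> real" where
  "L2_norm_grad \<Omega> u = sqrt (\<integral>x. (norm (grad u x))\<^sup>2 \<partial>(lebesgue_on \<Omega>))"

definition in_L2 :: "(real^'n) set \<Rightarrow> (real^'n \<Rightarrow> real) \<Rightarrow> bool" where
  "in_L2 \<Omega> f \<longleftrightarrow> f \<in> borel_measurable (lebesgue_on \<Omega>)
      \<and> integrable (lebesgue_on \<Omega>) (\<lambda>x. (f x)\<^sup>2)"

end

theory Submission
  imports Defs
begin

text \<open>Testing the discrete equation for \<open>w = w\<^sub>h(y)\<close> with \<open>w\<close> itself gives the energy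
  inequality \<open>\<parallel>\<nabla>w\<parallel>\<^sup>2 + e\<^sup>y \<parallel>w\<parallel>\<^sup>2 = (f, w) \<le> \<parallel>f\<parallel> \<parallel>w\<parallel>\<close>. Subtracting the equations for \<open>y\<close>
  and \<open>y'\<close> and testing with \<open>e = w\<^sub>h(y) - w\<^sub>h(y')\<close> gives
  \<open>\<parallel>\<nabla>e\<parallel>\<^sup>2 + e\<^sup>y \<parallel>e\<parallel>\<^sup>2 = (e\<^sup>y\<^sup>' - e\<^sup>y) (w\<^sub>h(y'), e)\<close>, an inequality of the same shape with
  \<open>\<parallel>f\<parallel>\<close> replaced by \<open>\<bar>e\<^sup>y - e\<^sup>y\<^sup>'\<bar> \<parallel>w\<^sub>h(y')\<parallel>\<close>. From such an inequality, Poincare's inequality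
  bounds the gradient, dropping the gradient term bounds the \<open>L\<^sup>2\<close> norm, and maximising
  \<open>c L - e\<^sup>y L\<^sup>2\<close> over \<open>L\<close> gives the bound with \<open>e\<^sup>-\<^sup>y\<^sup>/\<^sup>2\<close>.
  The analytic work is to justify these manipulations of the bilinear forms: a P1 function is
  continuous on the compact closure of the domain and affine near every point off the null set of
  simplex boundaries, so its gradient is bounded and measurable.\<close>

lemma energy_inequality_bounds:
  fixes G L c C k :: real
  assumes G: "0 \<le> G" and L: "0 \<le> L" and c: "0 \<le> c" and C: "0 \<le> C" and k: "0 < k"
    and poincare: "L \<le> C * G" and energy: "G\<^sup>2 + k * L\<^sup>2 \<le> c * L"
  shows "G \<le> C * c" "L \<le> c / k" "G \<le> c / (2 * sqrt k)"
proof -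
  have "0 \<le> k * L\<^sup>2" using k by simp
  then have "G * G \<le> c * L" using energy by (simp add: power2_eq_square)
  also have "\<dots> \<le> (C * c) * G" using mult_left_mono[OF poincare c] by (simp add: ac_simps)
  finally have "G * G \<le> (C * c) * G" .
  then show "G \<le> C * c"
    using G C c by (cases "G = 0") (simp_all add: mult_le_cancel_right_pos)
  have "k * L\<^sup>2 \<le> c * L" using energy zero_le_power2[of G] by linarith
  then have "(k * L) * L \<le> c * L" by (simp add: power2_eq_square mult.assoc)
  then have "k * L \<le> c" using L c by (cases "L = 0") (simp_all add: mult_le_cancel_right_pos)
  then show "L \<le> c / k" using k by (simp add: field_simps)
  have "c\<^sup>2 - 4 * k * (c * L - k * L\<^sup>2) = (2 * k * L - c)\<^sup>2"
    by (simp add: power2_eq_square algebra_simps)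
  then have "4 * k * (c * L - k * L\<^sup>2) \<le> c\<^sup>2" using zero_le_power2[of "2 * k * L - c"] by linarith
  moreover have "4 * k * G\<^sup>2 \<le> 4 * k * (c * L - k * L\<^sup>2)" using energy k by simp
  ultimately have "4 * k * G\<^sup>2 \<le> c\<^sup>2" by linarith
  then have "(2 * sqrt k * G)\<^sup>2 \<le> c\<^sup>2" using k by (simp add: power_mult_distrib)
  then have "2 * sqrt k * G \<le> c" using c by (rule power2_le_imp_le)
  then show "G \<le> c / (2 * sqrt k)" using k by (simp add: field_simps)
qed

lemma integrable_mult_of_square_integrable:
  fixes f g :: "'a \<Rightarrow> real"
  assumes [measurable]: "f \<in> borel_measurable M" "g \<in> borel_measurable M"
    and f2: "integrable M (\<lambda>x. (f x)\<^sup>2)" and g2: "integrable M (\<lambda>x. (g x)\<^sup>2)"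
  shows "integrable M (\<lambda>x. f x * g x)"
proof -
  have "\<bar>f x * g x\<bar> \<le> (f x)\<^sup>2 + (g x)\<^sup>2" for x
  proof -
    have "2 * (f x * g x) \<le> (f x)\<^sup>2 + (g x)\<^sup>2" "2 * (- f x * g x) \<le> (f x)\<^sup>2 + (g x)\<^sup>2"
      using sum_squares_bound[of "f x" "g x"] sum_squares_bound[of "- f x" "g x"]
      by (simp_all only: mult.assoc power2_minus)
    then show ?thesis by (simp only: abs_le_iff mult_minus_left) linarith
  qed
  then show ?thesis
    by (intro Bochner_Integration.integrable_bound[OF Bochner_Integration.integrable_add[OF f2 g2]]) auto
qed

lemma square_le_of_quadratic_nonneg:
  fixes A B C :: real
  assumes "0 \<le> A" and quadratic: "\<And>t. 0 \<le> t\<^sup>2 * A - 2 * t * C + B"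
  shows "C\<^sup>2 \<le> A * B"
proof (cases "A = 0")
  case True
  have "C = 0"
  proof (rule ccontr)
    assume "C \<noteq> 0"
    then show False using quadratic[of "(B + 1) / (2 * C)"] True by simp
  qed
  then show ?thesis using True by simp
next
  case False
  with \<open>0 \<le> A\<close> have "0 < A" by simp
  have "0 \<le> (C / A)\<^sup>2 * A - 2 * (C / A) * C + B" by (rule quadratic)
  also have "\<dots> = (A * B - C\<^sup>2) / A" using \<open>0 < A\<close> by (simp add: field_simps power2_eq_square)
  finally show ?thesis using \<open>0 < A\<close> by (simp add: zero_le_divide_iff)
qed

lemma Cauchy_Schwarz_integral:
  fixes f g :: "'a \<Rightarrow> real"
  assumes [measurable]: "f \<in> borel_measurable M" "g \<in> borel_measurable M"
    and f2: "integrable M (\<lambda>x. (f x)\<^sup>2)" and g2: "integrable M (\<lambda>x. (g x)\<^sup>2)"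
  shows "\<bar>\<integral>x. f x * g x \<partial>M\<bar> \<le> sqrt (\<integral>x. (f x)\<^sup>2 \<partial>M) * sqrt (\<integral>x. (g x)\<^sup>2 \<partial>M)"
proof -
  have fg: "integrable M (\<lambda>x. f x * g x)"
    using f2 g2 by (rule integrable_mult_of_square_integrable[rotated 2]) simp_all
  have "0 \<le> (\<integral>x. (f x)\<^sup>2 \<partial>M)" by (intro Bochner_Integration.integral_nonneg) auto
  moreover have "0 \<le> t\<^sup>2 * (\<integral>x. (f x)\<^sup>2 \<partial>M) - 2 * t * (\<integral>x. f x * g x \<partial>M) + (\<integral>x. (g x)\<^sup>2 \<partial>M)"
    for t
  proof -
    have "0 \<le> (\<integral>x. (t * f x - g x)\<^sup>2 \<partial>M)" by (intro Bochner_Integration.integral_nonneg) auto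
    also have "\<dots> = (\<integral>x. t\<^sup>2 * (f x)\<^sup>2 + (- 2 * t) * (f x * g x) + (g x)\<^sup>2 \<partial>M)"
      by (intro Bochner_Integration.integral_cong) (auto simp: power2_eq_square algebra_simps)
    also have "\<dots> = t\<^sup>2 * (\<integral>x. (f x)\<^sup>2 \<partial>M) - 2 * t * (\<integral>x. f x * g x \<partial>M) + (\<integral>x. (g x)\<^sup>2 \<partial>M)"
      using f2 g2 fg by simp
    finally show ?thesis .
  qed
  ultimately have "(\<integral>x. f x * g x \<partial>M)\<^sup>2 \<le> (\<integral>x. (f x)\<^sup>2 \<partial>M) * (\<integral>x. (g x)\<^sup>2 \<partial>M)"
    by (rule square_le_of_quadratic_nonneg)
  then have "sqrt ((\<integral>x. f x * g x \<partial>M)\<^sup>2) \<le> sqrt ((\<integral>x. (f x)\<^sup>2 \<partial>M) * (\<integral>x. (g x)\<^sup>2 \<partial>M))"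
    by (rule real_sqrt_le_mono)
  then show ?thesis by (simp add: real_sqrt_mult)
qed

lemma L2_norm_nonneg: "0 \<le> L2_norm \<Omega> u"
  unfolding L2_norm_def by (intro real_sqrt_ge_zero Bochner_Integration.integral_nonneg) auto

lemma L2_norm_grad_nonneg: "0 \<le> L2_norm_grad \<Omega> u"
  unfolding L2_norm_grad_def by (intro real_sqrt_ge_zero Bochner_Integration.integral_nonneg) auto

lemma power2_L2_norm: "(L2_norm \<Omega> u)\<^sup>2 = (\<integral>x. u x * u x \<partial>lebesgue_on \<Omega>)"
proof -
  have "0 \<le> (\<integral>x. (u x)\<^sup>2 \<partial>lebesgue_on \<Omega>)" by (intro Bochner_Integration.integral_nonneg) auto
  then show ?thesis unfolding L2_norm_def by (simp add: power2_eq_square)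
qed

lemma power2_L2_norm_grad:
  "(L2_norm_grad \<Omega> u)\<^sup>2 = (\<integral>x. grad u x \<bullet> grad u x \<partial>lebesgue_on \<Omega>)"
proof -
  have "0 \<le> (\<integral>x. (norm (grad u x))\<^sup>2 \<partial>lebesgue_on \<Omega>)"
    by (intro Bochner_Integration.integral_nonneg) auto
  then show ?thesis unfolding L2_norm_grad_def by (simp add: power2_norm_eq_inner)
qed

lemma abs_integral_mult_le_L2_norm:
  assumes "in_L2 \<Omega> f" "in_L2 \<Omega> g"
  shows "\<bar>\<integral>x. f x * g x \<partial>lebesgue_on \<Omega>\<bar> \<le> L2_norm \<Omega> f * L2_norm \<Omega> g"
  using assms unfolding in_L2_def L2_norm_def by (intro Cauchy_Schwarz_integral) auto

lemma P1_space_diff: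
  assumes "u \<in> P1_space \<T> \<Omega>" "v \<in> P1_space \<T> \<Omega>"
  shows "(\<lambda>x. u x - v x) \<in> P1_space \<T> \<Omega>"
proof -
  have "\<exists>a b. \<forall>x\<in>T. u x - v x = a \<bullet> x + b" if "T \<in> \<T>" for T
  proof -
    obtain a1 b1 where "\<forall>x\<in>T. u x = a1 \<bullet> x + b1"
      using assms(1) \<open>T \<in> \<T>\<close> unfolding P1_space_def by blast
    moreover obtain a2 b2 where "\<forall>x\<in>T. v x = a2 \<bullet> x + b2"
      using assms(2) \<open>T \<in> \<T>\<close> unfolding P1_space_def by blast
    ultimately have "\<forall>x\<in>T. u x - v x = (a1 - a2) \<bullet> x + (b1 - b2)" by (simp add: inner_diff_left)
    then show ?thesis by blast
  qed
  then show ?thesis using assms by (auto simp: P1_space_def intro!: continuous_on_diff)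
qed

lemma P1_space_bounded:
  assumes "bounded \<Omega>" "u \<in> P1_space \<T> \<Omega>"
  shows "\<exists>B. \<forall>x\<in>\<Omega>. \<bar>u x\<bar> \<le> B"
proof -
  have "continuous_on (closure \<Omega>) u" using assms(2) by (simp add: P1_space_def)
  moreover have "compact (closure \<Omega>)" using assms(1) by (simp add: compact_closure)
  ultimately have "bounded (u ` closure \<Omega>)" by (intro compact_imp_bounded compact_continuous_image)
  then obtain B where "\<forall>x\<in>closure \<Omega>. \<bar>u x\<bar> \<le> B" unfolding bounded_iff by auto
  then show ?thesis using closure_subset[of \<Omega>] by blast
qed

lemma borel_measurable_P1_space:
  assumes "\<Omega> \<in> sets lebesgue" "u \<in> P1_space \<T> \<Omega>"
  shows "u \<in> borel_measurable (lebesgue_on \<Omega>)"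
proof -
  have "continuous_on (closure \<Omega>) u" using assms(2) by (simp add: P1_space_def)
  then have "continuous_on \<Omega> u" using closure_subset continuous_on_subset by blast
  then show ?thesis using assms(1) by (rule continuous_imp_measurable_on_sets_lebesgue)
qed

lemma integrable_mult_P1_space:
  assumes dom: "bounded_domain \<Omega>" and u: "u \<in> P1_space \<T> \<Omega>" and v: "v \<in> P1_space \<T> \<Omega>"
  shows "integrable (lebesgue_on \<Omega>) (\<lambda>x. u x * v x)"
proof -
  have \<Omega>: "open \<Omega>" "bounded \<Omega>" using dom by (auto simp: bounded_domain_def)
  interpret finite_measure "lebesgue_on \<Omega>"
    using \<Omega> by (intro finite_measure_lebesgue_on lmeasurable_open)
  obtain Bu Bv where "\<forall>x\<in>\<Omega>. \<bar>u x\<bar> \<le> Bu" "\<forall>x\<in>\<Omega>. \<bar>v x\<bar> \<le> Bv"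
    using P1_space_bounded[OF \<Omega>(2) u] P1_space_bounded[OF \<Omega>(2) v] by blast
  then have "\<forall>x\<in>\<Omega>. norm (u x * v x) \<le> Bu * Bv"
    by (simp add: abs_mult mult_mono')
  then have "AE x in lebesgue_on \<Omega>. norm (u x * v x) \<le> Bu * Bv"
    by (intro AE_I2) (simp add: space_restrict_space)
  moreover have "(\<lambda>x. u x * v x) \<in> borel_measurable (lebesgue_on \<Omega>)"
    using borel_measurable_P1_space[OF _ u] borel_measurable_P1_space[OF _ v] \<Omega> by simp
  ultimately show ?thesis by (intro integrable_const_bound)
qed

lemma in_L2_P1_space:
  assumes "bounded_domain \<Omega>" "u \<in> P1_space \<T> \<Omega>"
  shows "in_L2 \<Omega> u"
  using borel_measurable_P1_space[OF _ assms(2)] integrable_mult_P1_space[OF assms assms(2)] assms(1)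
  by (simp add: in_L2_def bounded_domain_def power2_eq_square)

lemma GDERIV_unique:
  fixes u :: "'a::real_inner \<Rightarrow> real"
  assumes "GDERIV u x :> a" "GDERIV u x :> d"
  shows "d = a"
proof -
  have "(\<lambda>h. h \<bullet> a) = (\<lambda>h. h \<bullet> d)"
    using assms unfolding gderiv_def by (rule has_derivative_unique)
  then have "(d - a) \<bullet> a = (d - a) \<bullet> d" by metis
  then have "(d - a) \<bullet> (d - a) = 0" by (simp add: inner_diff_right)
  then show ?thesis by simp
qed

lemma grad_eqI:
  assumes "GDERIV u x :> a"
  shows "grad u x = a"
proof -
  have "(THE D. GDERIV u x :> D) = a" using assms GDERIV_unique by (intro the_equality) blast+
  then show ?thesis using assms unfolding grad_def by auto
qed

lemma GDERIV_affine_on_ball: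
  fixes u :: "'a::real_inner \<Rightarrow> real"
  assumes "0 < r" "\<forall>z\<in>ball x r. u z = a \<bullet> z + b"
  shows "GDERIV u x :> a"
proof -
  have "((\<lambda>z. a \<bullet> z + b) has_derivative (\<lambda>h. h \<bullet> a)) (at x)"
    by (auto intro!: derivative_eq_intros simp: inner_commute)
  then have "(u has_derivative (\<lambda>h. h \<bullet> a)) (at x)"
    by (rule has_derivative_transform_within_open[where s = "ball x r"]) (use assms in auto)
  then show ?thesis by (simp add: gderiv_def)
qed

definition locally_affine_off :: "'a::real_inner set \<Rightarrow> real \<Rightarrow> ('a \<Rightarrow> real) \<Rightarrow> bool" where
  "locally_affine_off N B u \<longleftrightarrow>
     (\<forall>x. x \<notin> N \<longrightarrow> (\<exists>a b r. 0 < r \<and> norm a \<le> B \<and> (\<forall>z\<in>ball x r. u z = a \<bullet> z + b)))"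

lemma locally_affine_off_grad:
  assumes "locally_affine_off N B u" "x \<notin> N"
  shows "GDERIV u x :> grad u x" "norm (grad u x) \<le> B"
    "\<forall>\<^sub>F z in nhds x. grad u z = grad u x"
proof -
  obtain a b r where r: "0 < r" "norm a \<le> B" and affine: "\<forall>z\<in>ball x r. u z = a \<bullet> z + b"
    using assms unfolding locally_affine_off_def by blast
  have grad_ball: "grad u z = a" if "z \<in> ball x r" for z
  proof -
    have "ball z (r - dist x z) \<subseteq> ball x r"
      by (simp add: ball_subset_ball_iff dist_commute)
    then have "\<forall>w\<in>ball z (r - dist x z). u w = a \<bullet> w + b" using affine by blast
    moreover have "0 < r - dist x z" using that by simp
    ultimately show ?thesis by (intro grad_eqI GDERIV_affine_on_ball)
  qed
  then have "grad u x = a" using r(1) by simp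
  then show "GDERIV u x :> grad u x" "norm (grad u x) \<le> B"
    using GDERIV_affine_on_ball[OF r(1) affine] r(2) by simp_all
  show "\<forall>\<^sub>F z in nhds x. grad u z = grad u x"
    using eventually_nhds_in_open[of "ball x r" x] r(1) \<open>grad u x = a\<close>
    by (auto elim!: eventually_mono simp: grad_ball)
qed

lemma continuous_on_grad_locally_affine_off:
  assumes "locally_affine_off N B u" "closed N"
  shows "continuous_on (- N) (grad u)"
proof -
  have "isCont (grad u) x" if "x \<notin> N" for x
  proof -
    have "\<forall>\<^sub>F z in at x. grad u z = grad u x"
      using locally_affine_off_grad(3)[OF assms(1) that]
      unfolding eventually_at_filter by (auto elim: eventually_mono)
    then show ?thesis unfolding isCont_def by (rule tendsto_eventually)
  qed
  then show ?thesis using assms(2) by (intro continuous_at_imp_continuous_on) auto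
qed

lemma P1_space_locally_affine_off:
  fixes u :: "real^'n \<Rightarrow> real"
  assumes tri: "conforming_triangulation \<T> \<Omega>" and u: "u \<in> P1_space \<T> \<Omega>"
  shows "\<exists>B. locally_affine_off (\<Union>T\<in>\<T>. frontier T) B u"
proof -
  have "\<forall>T\<in>\<T>. \<exists>a b. \<forall>x\<in>T. u x = a \<bullet> x + b" using u by (simp add: P1_space_def)
  then obtain A c where affine: "\<forall>T\<in>\<T>. \<forall>x\<in>T. u x = A T \<bullet> x + c T"
    by (metis bchoice)
  have fin: "finite \<T>" and cover: "\<Union>\<T> = closure \<Omega>"
    using tri by (auto simp: conforming_triangulation_def)
  have "\<exists>a b r. 0 < r \<and> norm a \<le> (\<Sum>T\<in>\<T>. norm (A T)) \<and> (\<forall>z\<in>ball x r. u z = a \<bullet> z + b)"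
    if x: "x \<notin> (\<Union>T\<in>\<T>. frontier T)" for x
  proof (cases "x \<in> closure \<Omega>")
    case True
    then obtain T where T: "T \<in> \<T>" "x \<in> T" using cover by blast
    then have "x \<in> interior T" using x closure_subset unfolding frontier_def by blast
    then obtain r where r: "0 < r" "ball x r \<subseteq> T"
      using open_interior[of T] interior_subset unfolding open_contains_ball by blast
    have "norm (A T) \<le> (\<Sum>T\<in>\<T>. norm (A T))" using fin T(1) by (intro member_le_sum) auto
    then show ?thesis using r affine T(1) by blast
  next
    case False
    then have "x \<in> - closure \<Omega>" by simp
    then obtain r where r: "0 < r" "ball x r \<subseteq> - closure \<Omega>"
      using open_Compl[OF closed_closure[of \<Omega>]] unfolding open_contains_ball by blast
    then have "z \<notin> \<Omega>" if "z \<in> ball x r" for z using that closure_subset by blast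
    then have "\<forall>z\<in>ball x r. u z = 0 \<bullet> z + 0" using u by (simp add: P1_space_def)
    moreover have "norm (0::real^'n) \<le> (\<Sum>T\<in>\<T>. norm (A T))" by (simp add: sum_nonneg)
    ultimately show ?thesis using r(1) by blast
  qed
  then show ?thesis unfolding locally_affine_off_def by blast
qed

lemma triangulation_frontiers_closed_negligible:
  assumes "conforming_triangulation \<T> \<Omega>"
  shows "closed (\<Union>T\<in>\<T>. frontier T)" "negligible (\<Union>T\<in>\<T>. frontier T)"
proof -
  have fin: "finite \<T>" using assms by (simp add: conforming_triangulation_def)
  then show "closed (\<Union>T\<in>\<T>. frontier T)" by (intro closed_UN) auto
  have "convex T" if "T \<in> \<T>" for T
    using assms that by (auto simp: conforming_triangulation_def simplex_def convex_convex_hull)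
  then show "negligible (\<Union>T\<in>\<T>. frontier T)"
    using fin by (intro negligible_Union) (auto intro: negligible_convex_frontier)
qed

lemma AE_lebesgue_on_not_in_negligible:
  assumes "negligible N" "S \<in> sets lebesgue"
  shows "AE x in lebesgue_on S. x \<notin> N"
proof -
  have "AE x in lebesgue. x \<notin> N"
    using assms(1) by (intro AE_not_in) (simp add: negligible_iff_null_sets)
  then show ?thesis using assms(2) by (subst AE_restrict_space_iff) (auto elim: eventually_mono)
qed

lemma borel_measurable_continuous_off_negligible:
  fixes g :: "'a::euclidean_space \<Rightarrow> 'b::euclidean_space"
  assumes "closed N" "negligible N" "continuous_on (- N) g"
  shows "g \<in> borel_measurable (lebesgue_on S)"
proof -
  have "(\<lambda>x. indicator (- N) x *\<^sub>R g x) \<in> borel_measurable borel"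
    using assms by (intro borel_measurable_continuous_on_indicator) auto
  then have "(\<lambda>x. indicator (- N) x *\<^sub>R g x) \<in> borel_measurable lebesgue"
    by (simp add: measurable_completion)
  moreover have "AE x in lebesgue. indicator (- N) x *\<^sub>R g x = g x"
    using AE_not_in[of N lebesgue] assms(2) by (auto simp: negligible_iff_null_sets elim: eventually_mono)
  ultimately have "g \<in> borel_measurable lebesgue" by (rule borel_measurable_AE)
  then show ?thesis by (simp add: measurable_restrict_space1)
qed

lemma integrable_grad_inner_P1_space:
  assumes dom: "bounded_domain \<Omega>" and tri: "conforming_triangulation \<T> \<Omega>"
    and u: "u \<in> P1_space \<T> \<Omega>" and v: "v \<in> P1_space \<T> \<Omega>"
  shows "integrable (lebesgue_on \<Omega>) (\<lambda>x. grad u x \<bullet> grad v x)"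
proof -
  let ?N = "\<Union>T\<in>\<T>. frontier T"
  note N = triangulation_frontiers_closed_negligible[OF tri]
  have \<Omega>: "open \<Omega>" "bounded \<Omega>" "\<Omega> \<in> sets lebesgue" using dom by (auto simp: bounded_domain_def)
  interpret finite_measure "lebesgue_on \<Omega>"
    using \<Omega> by (intro finite_measure_lebesgue_on lmeasurable_open)
  obtain Bu Bv where Bu: "locally_affine_off ?N Bu u" and Bv: "locally_affine_off ?N Bv v"
    using P1_space_locally_affine_off[OF tri u] P1_space_locally_affine_off[OF tri v] by blast
  have "continuous_on (- ?N) (\<lambda>x. grad u x \<bullet> grad v x)"
    using continuous_on_grad_locally_affine_off[OF Bu N(1)]
      continuous_on_grad_locally_affine_off[OF Bv N(1)]
    by (rule continuous_on_inner)
  then have "(\<lambda>x. grad u x \<bullet> grad v x) \<in> borel_measurable (lebesgue_on \<Omega>)"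
    using N by (intro borel_measurable_continuous_off_negligible)
  moreover have "norm (grad u x \<bullet> grad v x) \<le> Bu * Bv" if "x \<notin> ?N" for x
    using order_trans[OF Cauchy_Schwarz_ineq2 mult_mono'[OF locally_affine_off_grad(2)[OF Bu that]
          locally_affine_off_grad(2)[OF Bv that] norm_ge_zero norm_ge_zero]]
    by simp
  then have "AE x in lebesgue_on \<Omega>. norm (grad u x \<bullet> grad v x) \<le> Bu * Bv"
    using AE_lebesgue_on_not_in_negligible[OF N(2) \<Omega>(3)] by (auto elim!: eventually_mono)
  ultimately show ?thesis by (intro integrable_const_bound)
qed

lemma AE_grad_diff_P1_space:
  assumes "\<Omega> \<in> sets lebesgue" and tri: "conforming_triangulation \<T> \<Omega>"
    and u: "u \<in> P1_space \<T> \<Omega>" and v: "v \<in> P1_space \<T> \<Omega>"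
  shows "AE x in lebesgue_on \<Omega>. grad (\<lambda>x. u x - v x) x = grad u x - grad v x"
proof -
  let ?N = "\<Union>T\<in>\<T>. frontier T"
  obtain Bu Bv where Bu: "locally_affine_off ?N Bu u" and Bv: "locally_affine_off ?N Bv v"
    using P1_space_locally_affine_off[OF tri u] P1_space_locally_affine_off[OF tri v] by blast
  have "grad (\<lambda>x. u x - v x) x = grad u x - grad v x" if "x \<notin> ?N" for x
    using locally_affine_off_grad(1)[OF Bu that] locally_affine_off_grad(1)[OF Bv that]
    by (intro grad_eqI GDERIV_diff)
  then show ?thesis
    using AE_lebesgue_on_not_in_negligible[OF triangulation_frontiers_closed_negligible(2)[OF tri]
        assms(1)]
    by (auto elim!: eventually_mono)
qed

lemma integral_grad_inner_diff_P1_space: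
  assumes dom: "bounded_domain \<Omega>" and tri: "conforming_triangulation \<T> \<Omega>"
    and u: "u \<in> P1_space \<T> \<Omega>" and v: "v \<in> P1_space \<T> \<Omega>" and w: "w \<in> P1_space \<T> \<Omega>"
  shows "(\<integral>x. grad u x \<bullet> grad w x \<partial>lebesgue_on \<Omega>) - (\<integral>x. grad v x \<bullet> grad w x \<partial>lebesgue_on \<Omega>)
    = (\<integral>x. grad (\<lambda>x. u x - v x) x \<bullet> grad w x \<partial>lebesgue_on \<Omega>)"
proof -
  let ?M = "lebesgue_on \<Omega>"
  have uw: "integrable ?M (\<lambda>x. grad u x \<bullet> grad w x)" and vw: "integrable ?M (\<lambda>x. grad v x \<bullet> grad w x)"
    using integrable_grad_inner_P1_space[OF dom tri] u v w by blast+
  then have "(\<integral>x. grad u x \<bullet> grad w x \<partial>?M) - (\<integral>x. grad v x \<bullet> grad w x \<partial>?M)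
      = (\<integral>x. (grad u x - grad v x) \<bullet> grad w x \<partial>?M)"
    by (simp add: inner_diff_left)
  also have "\<dots> = (\<integral>x. grad (\<lambda>x. u x - v x) x \<bullet> grad w x \<partial>?M)"
  proof (rule integral_cong_AE)
    show "(\<lambda>x. (grad u x - grad v x) \<bullet> grad w x) \<in> borel_measurable ?M"
      using borel_measurable_integrable[OF uw] borel_measurable_integrable[OF vw]
      by (simp add: inner_diff_left)
    show "(\<lambda>x. grad (\<lambda>x. u x - v x) x \<bullet> grad w x) \<in> borel_measurable ?M"
      using integrable_grad_inner_P1_space[OF dom tri P1_space_diff[OF u v] w]
      by (rule borel_measurable_integrable)
    have "\<Omega> \<in> sets lebesgue" using dom by (simp add: bounded_domain_def)
    then show "AE x in ?M. (grad u x - grad v x) \<bullet> grad w x = grad (\<lambda>x. u x - v x) x \<bullet> grad w x"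
      using AE_grad_diff_P1_space[OF _ tri u v] by (auto elim: eventually_mono)
  qed
  finally show ?thesis .
qed

definition fe_solution ::
    "(real^'n) set set \<Rightarrow> (real^'n) set \<Rightarrow> (real^'n \<Rightarrow> real) \<Rightarrow> real \<Rightarrow> (real^'n \<Rightarrow> real) \<Rightarrow> bool"
  where "fe_solution \<T> \<Omega> f t u \<longleftrightarrow> u \<in> P1_space \<T> \<Omega> \<and>
    (\<forall>v\<in>P1_space \<T> \<Omega>.
       (\<integral>x. grad u x \<bullet> grad v x \<partial>lebesgue_on \<Omega>) + exp t * (\<integral>x. u x * v x \<partial>lebesgue_on \<Omega>)
       = (\<integral>x. f x * v x \<partial>lebesgue_on \<Omega>))"

lemma fe_solution_energy:
  assumes dom: "bounded_domain \<Omega>" and f: "in_L2 \<Omega> f" and u: "fe_solution \<T> \<Omega> f t u"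
  shows "(L2_norm_grad \<Omega> u)\<^sup>2 + exp t * (L2_norm \<Omega> u)\<^sup>2 \<le> L2_norm \<Omega> f * L2_norm \<Omega> u"
proof -
  have P1: "u \<in> P1_space \<T> \<Omega>" using u by (simp add: fe_solution_def)
  then have "(L2_norm_grad \<Omega> u)\<^sup>2 + exp t * (L2_norm \<Omega> u)\<^sup>2 = (\<integral>x. f x * u x \<partial>lebesgue_on \<Omega>)"
    using u by (simp add: fe_solution_def power2_L2_norm power2_L2_norm_grad)
  also have "\<dots> \<le> L2_norm \<Omega> f * L2_norm \<Omega> u"
    using abs_integral_mult_le_L2_norm[OF f in_L2_P1_space[OF dom P1]] by linarith
  finally show ?thesis .
qed

lemma fe_solution_diff_energy:
  assumes dom: "bounded_domain \<Omega>" and tri: "conforming_triangulation \<T> \<Omega>"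
    and u: "fe_solution \<T> \<Omega> f s u" and v: "fe_solution \<T> \<Omega> f t v"
  defines "e \<equiv> \<lambda>x. u x - v x"
  shows "(L2_norm_grad \<Omega> e)\<^sup>2 + exp s * (L2_norm \<Omega> e)\<^sup>2
    \<le> \<bar>exp s - exp t\<bar> * L2_norm \<Omega> v * L2_norm \<Omega> e"
proof -
  let ?M = "lebesgue_on \<Omega>"
  have uP: "u \<in> P1_space \<T> \<Omega>" and vP: "v \<in> P1_space \<T> \<Omega>"
    using u v by (simp_all add: fe_solution_def)
  have eP: "e \<in> P1_space \<T> \<Omega>" unfolding e_def using uP vP by (rule P1_space_diff)
  have grad_part: "(\<integral>x. grad u x \<bullet> grad e x \<partial>?M) - (\<integral>x. grad v x \<bullet> grad e x \<partial>?M)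
      = (L2_norm_grad \<Omega> e)\<^sup>2"
    using integral_grad_inner_diff_P1_space[OF dom tri uP vP eP, folded e_def]
    by (simp add: power2_L2_norm_grad)
  have "(\<integral>x. u x * e x \<partial>?M) - (\<integral>x. v x * e x \<partial>?M) = (\<integral>x. e x * e x \<partial>?M)"
    using integrable_mult_P1_space[OF dom uP eP] integrable_mult_P1_space[OF dom vP eP]
    by (simp add: e_def left_diff_distrib)
  then have mass_part: "(\<integral>x. u x * e x \<partial>?M) = (L2_norm \<Omega> e)\<^sup>2 + (\<integral>x. v x * e x \<partial>?M)"
    by (simp add: power2_L2_norm)
  have "(\<integral>x. grad u x \<bullet> grad e x \<partial>?M) + exp s * (\<integral>x. u x * e x \<partial>?M)
      = (\<integral>x. grad v x \<bullet> grad e x \<partial>?M) + exp t * (\<integral>x. v x * e x \<partial>?M)"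
    using u v eP by (simp add: fe_solution_def)
  then have "(L2_norm_grad \<Omega> e)\<^sup>2 + exp s * (L2_norm \<Omega> e)\<^sup>2 = (exp t - exp s) * (\<integral>x. v x * e x \<partial>?M)"
    unfolding grad_part[symmetric] mass_part by (simp only: distrib_left left_diff_distrib)
  also have "\<dots> \<le> \<bar>(exp t - exp s) * (\<integral>x. v x * e x \<partial>?M)\<bar>" by (rule abs_ge_self)
  also have "\<dots> = \<bar>exp s - exp t\<bar> * \<bar>\<integral>x. v x * e x \<partial>?M\<bar>"
    by (simp only: abs_mult abs_minus_commute[of "exp t"])
  also have "\<dots> \<le> \<bar>exp s - exp t\<bar> * (L2_norm \<Omega> v * L2_norm \<Omega> e)"
    using abs_integral_mult_le_L2_norm[OF in_L2_P1_space[OF dom vP] in_L2_P1_space[OF dom eP]]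
    by (rule mult_left_mono) simp
  finally show ?thesis by (simp add: mult.assoc)
qed

lemma fe_solution_bounds:
  assumes dom: "bounded_domain \<Omega>" and f: "in_L2 \<Omega> f" and CP: "0 \<le> C_P"
    and poincare: "\<forall>v\<in>P1_space \<T> \<Omega>. L2_norm \<Omega> v \<le> C_P * L2_norm_grad \<Omega> v"
    and u: "fe_solution \<T> \<Omega> f t u"
  shows "L2_norm_grad \<Omega> u \<le> C_P * L2_norm \<Omega> f" "L2_norm \<Omega> u \<le> exp (- t) * L2_norm \<Omega> f"
    "L2_norm \<Omega> u \<le> C_P\<^sup>2 * L2_norm \<Omega> f"
proof -
  have poincare_u: "L2_norm \<Omega> u \<le> C_P * L2_norm_grad \<Omega> u"
    using poincare u by (simp add: fe_solution_def)
  note bounds = energy_inequality_bounds[OF L2_norm_grad_nonneg L2_norm_nonneg L2_norm_nonneg CP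
      exp_gt_zero poincare_u fe_solution_energy[OF dom f u]]
  show grad_bound: "L2_norm_grad \<Omega> u \<le> C_P * L2_norm \<Omega> f" "L2_norm \<Omega> u \<le> exp (- t) * L2_norm \<Omega> f"
    using bounds(1,2) by (simp_all add: exp_minus divide_inverse mult.commute)
  show "L2_norm \<Omega> u \<le> C_P\<^sup>2 * L2_norm \<Omega> f"
    using poincare_u mult_left_mono[OF grad_bound(1) CP] by (simp add: power2_eq_square mult.assoc)
qed

lemma sqrt_exp: "sqrt (exp x) = exp (x / 2)"
  by (rule real_sqrt_unique) (simp_all add: power2_eq_square exp_add[symmetric])

lemma abs_exp_diff_minus_one:
  fixes s t :: real
  shows "\<bar>exp (s - t) - 1\<bar> = \<bar>exp s - exp t\<bar> * exp (- t)"
proof -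
  have "exp (s - t) - 1 = (exp s - exp t) * exp (- t)"
    using exp_add[of s "- t"] exp_add[of t "- t"] by (simp add: left_diff_distrib)
  then show ?thesis by (simp add: abs_mult)
qed

lemma fe_solution_diff_bounds:
  assumes dom: "bounded_domain \<Omega>" and tri: "conforming_triangulation \<T> \<Omega>"
    and f: "in_L2 \<Omega> f" and CP: "0 \<le> C_P"
    and poincare: "\<forall>v\<in>P1_space \<T> \<Omega>. L2_norm \<Omega> v \<le> C_P * L2_norm_grad \<Omega> v"
    and u: "fe_solution \<T> \<Omega> f s u" and v: "fe_solution \<T> \<Omega> f t v"
  defines "e \<equiv> \<lambda>x. u x - v x"
  shows "L2_norm_grad \<Omega> e \<le> C_P ^ 3 * \<bar>exp s - exp t\<bar> * L2_norm \<Omega> f"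
    "L2_norm \<Omega> e \<le> exp (- s) * \<bar>exp (s - t) - 1\<bar> * L2_norm \<Omega> f"
    "L2_norm_grad \<Omega> e \<le> 1/2 * exp (- s / 2) * \<bar>exp (s - t) - 1\<bar> * L2_norm \<Omega> f"
proof -
  let ?D = "\<bar>exp s - exp t\<bar>" and ?F = "L2_norm \<Omega> f"
  have "e \<in> P1_space \<T> \<Omega>"
    using u v unfolding e_def fe_solution_def by (blast intro: P1_space_diff)
  then have "L2_norm \<Omega> e \<le> C_P * L2_norm_grad \<Omega> e" using poincare by blast
  note bounds = energy_inequality_bounds[OF L2_norm_grad_nonneg L2_norm_nonneg
      mult_nonneg_nonneg[OF abs_ge_zero L2_norm_nonneg] CP exp_gt_zero this
      fe_solution_diff_energy[OF dom tri u v, folded e_def]]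
  have v_grad: "?D * L2_norm \<Omega> v \<le> ?D * (C_P\<^sup>2 * ?F)"
    using fe_solution_bounds(3)[OF dom f CP poincare v] by (simp add: mult_left_mono)
  have v_mass: "?D * L2_norm \<Omega> v \<le> ?D * exp (- t) * ?F"
    using mult_left_mono[OF fe_solution_bounds(2)[OF dom f CP poincare v], of ?D]
    by (simp add: mult.assoc)
  have "L2_norm_grad \<Omega> e \<le> C_P * (?D * L2_norm \<Omega> v)" by (rule bounds(1))
  also have "\<dots> \<le> C_P * (?D * (C_P\<^sup>2 * ?F))" using v_grad CP by (rule mult_left_mono)
  finally show "L2_norm_grad \<Omega> e \<le> C_P ^ 3 * ?D * ?F" by (simp add: power2_eq_square power3_eq_cube ac_simps)
  have "L2_norm \<Omega> e \<le> ?D * L2_norm \<Omega> v / exp s" by (rule bounds(2))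
  also have "\<dots> \<le> ?D * exp (- t) * ?F / exp s" using v_mass by (simp add: divide_right_mono)
  also have "\<dots> = exp (- s) * \<bar>exp (s - t) - 1\<bar> * ?F"
    by (simp add: abs_exp_diff_minus_one exp_minus field_simps)
  finally show "L2_norm \<Omega> e \<le> exp (- s) * \<bar>exp (s - t) - 1\<bar> * ?F" .
  have "L2_norm_grad \<Omega> e \<le> ?D * L2_norm \<Omega> v / (2 * sqrt (exp s))" by (rule bounds(3))
  also have "\<dots> \<le> ?D * exp (- t) * ?F / (2 * exp (s / 2))"
    using v_mass by (simp add: sqrt_exp divide_right_mono)
  also have "\<dots> = 1/2 * exp (- s / 2) * \<bar>exp (s - t) - 1\<bar> * ?F"
    by (simp add: abs_exp_diff_minus_one exp_minus field_simps)
  finally show "L2_norm_grad \<Omega> e \<le> 1/2 * exp (- s / 2) * \<bar>exp (s - t) - 1\<bar> * ?F" .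
qed

theorem lemma2p1:
  fixes \<Omega> :: "(real^'n) set" and \<T> :: "(real^'n) set set"
    and f :: "real^'n \<Rightarrow> real" and w :: "real \<Rightarrow> real^'n \<Rightarrow> real"
    and C_P y ybar :: real
  assumes dim: "CARD('n) \<le> 3"
    and dom: "bounded_domain \<Omega>"
    and tri: "conforming_triangulation \<T> \<Omega>"
    and f: "in_L2 \<Omega> f"
    and CP_pos: "C_P > 0"
    and poincare: "\<forall>v\<in>P1_space \<T> \<Omega>. L2_norm \<Omega> v \<le> C_P * L2_norm_grad \<Omega> v"
    and w_mem: "\<forall>t. w t \<in> P1_space \<T> \<Omega>"
    and w_eq: "\<forall>t. \<forall>v\<in>P1_space \<T> \<Omega>.
        (\<integral>x. grad (w t) x \<bullet> grad v x \<partial>(lebesgue_on \<Omega>))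
          + exp t * (\<integral>x. w t x * v x \<partial>(lebesgue_on \<Omega>))
        = (\<integral>x. f x * v x \<partial>(lebesgue_on \<Omega>))"
  shows "L2_norm_grad \<Omega> (w y) \<le> C_P * L2_norm \<Omega> f
    \<and> L2_norm \<Omega> (w y) \<le> exp (- y) * L2_norm \<Omega> f
    \<and> L2_norm_grad \<Omega> (\<lambda>x. w y x - w ybar x) \<le> C_P ^ 3 * \<bar>exp y - exp ybar\<bar> * L2_norm \<Omega> f
    \<and> L2_norm \<Omega> (\<lambda>x. w y x - w ybar x) \<le> exp (- y) * \<bar>exp (y - ybar) - 1\<bar> * L2_norm \<Omega> f
    \<and> L2_norm_grad \<Omega> (\<lambda>x. w y x - w ybar x) \<le> 1/2 * exp (- y / 2) * \<bar>exp (y - ybar) - 1\<bar> * L2_norm \<Omega> f"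
proof -
  have sol: "fe_solution \<T> \<Omega> f t (w t)" for t
    using w_mem w_eq by (simp add: fe_solution_def)
  have CP: "0 \<le> C_P" using CP_pos by simp
  show ?thesis
    using fe_solution_bounds[OF dom f CP poincare sol]
      fe_solution_diff_bounds[OF dom tri f CP poincare sol sol]
    by blast
qed

end
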